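(* Let $\varphi_{tm}$ be the morphism on finite sequences of numbers in $[0,1]$ defined by $\varphi_{tm}(x)=\left(\tfrac{x}{2}+\tfrac14,\ \tfrac{x}{2}+\tfrac34\right)$ if $0\le x\le \tfrac12$ and $\varphi_{tm}(x)=\left(\tfrac{x}{2}+\tfrac14,\ \tfrac{x}{2}-\tfrac14\right)$ if $\tfrac12<x\le 1$, extended by concatenation. Let $a_{tm}=\tfrac12,1,\tfrac34,\tfrac14,\tfrac58,\tfrac18,\tfrac38,\tfrac78,\ldots$ be its fixed point starting with $\tfrac12$. Then $a_{tm}$ is a canonical sequence and it is a representative of the valid permutation $\alpha_{u_{tm}}$ of the Thue–Morse word $u_{tm}=0110100110010110\cdots$ (the fixed point starting with $0$ of $0\mapsto 01,\ 1\mapsto 10$). In particular, the Thue–Morse permutation is ergodic and $a_{tm}$ is its canonical representative.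
   Context: For an aperiodic infinite word $u$ over $\{0,\ldots,q-1\}$, $\alpha_u$ is the infinite permutation with $\alpha_u[i]<\alpha_u[j]$ iff the shift $T^iu=u[i]u[i+1]\cdots$ is lexicographically smaller than $T^ju$. An infinite permutation is an equivalence class of real sequences with pairwise distinct elements, two sequences $(a[n]),(b[n])$ being equivalent iff $a[i]<a[j]\Leftrightarrow b[i]<b[j]$ for all $i,j$. A real sequence $(a[i])_{i\ge0}$ is canonical if its elements are pairwise distinct, lie in $[0,1]$, and for every $t\in[0,1]$, $\#\{0\le k<n: a[j+k]<t\}/n\to t$ as $n\to\infty$ uniformly in $j$; a permutation is ergodic if it has a canonical representative. *)

theory Defs
  imports Complex_Main
begin

definition tm_morph :: "nat \<Rightarrow> nat list" where
  "tm_morph x = (if x = 0 then [0, 1] else [1, 0])"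

text \<open>Its fixed point starting with 0: letter n is letter (n mod 2) of the image
  of letter (n div 2).\<close>
function u_tm :: "nat \<Rightarrow> nat" where
  "u_tm n = (if n = 0 then 0 else tm_morph (u_tm (n div 2)) ! (n mod 2))"
  by auto
termination by (relation "measure id") auto

definition phi_tm :: "real \<Rightarrow> real list" where
  "phi_tm x = (if x \<le> 1/2 then [x/2 + 1/4, x/2 + 3/4] else [x/2 + 1/4, x/2 - 1/4])"

definition phi_tm_list :: "real list \<Rightarrow> real list" where
  "phi_tm_list xs = concat (map phi_tm xs)"

text \<open>Its fixed point starting with 1/2.\<close>
function a_tm :: "nat \<Rightarrow> real" where
  "a_tm n = (if n = 0 then 1/2 else phi_tm (a_tm (n div 2)) ! (n mod 2))"
  by auto
termination by (relation "measure id") auto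

definition shift :: "nat \<Rightarrow> (nat \<Rightarrow> 'a) \<Rightarrow> (nat \<Rightarrow> 'a)" where
  "shift i u = (\<lambda>n. u (i + n))"

definition lex_less :: "(nat \<Rightarrow> nat) \<Rightarrow> (nat \<Rightarrow> nat) \<Rightarrow> bool" where
  "lex_less u v \<longleftrightarrow> (\<exists>k. (\<forall>i<k. u i = v i) \<and> u k < v k)"

text \<open>The infinite permutation alpha_u, as the equivalence class of real sequences
  with pairwise distinct elements ordered like the shifts of u.\<close>
definition alpha_perm :: "(nat \<Rightarrow> nat) \<Rightarrow> (nat \<Rightarrow> real) set" where
  "alpha_perm u = {b. inj b \<and> (\<forall>i j. b i < b j \<longleftrightarrow> lex_less (shift i u) (shift j u))}"

definition canonical :: "(nat \<Rightarrow> real) \<Rightarrow> bool" where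
  "canonical a \<longleftrightarrow> inj a \<and> (\<forall>i. 0 \<le> a i \<and> a i \<le> 1) \<and>
     (\<forall>t. 0 \<le> t \<and> t \<le> 1 \<longrightarrow>
        (\<forall>\<epsilon>>0. \<exists>N. \<forall>n\<ge>N. \<forall>j.
           \<bar>real (card {k. k < n \<and> a (j + k) < t}) / real n - t\<bar> < \<epsilon>))"

definition ergodic :: "(nat \<Rightarrow> real) set \<Rightarrow> bool" where
  "ergodic P \<longleftrightarrow> (\<exists>b\<in>P. canonical b)"

end

theory Submission
  imports Defs
begin

text \<open>
  Write \<open>u = u_tm\<close>, \<open>a = a_tm\<close>. At even positions \<open>phi_tm\<close> acts by \<open>x \<mapsto> x/2 + 1/4\<close>, with
  values in \<open>(1/4, 3/4]\<close>; at odd positions by \<open>x \<mapsto> x/2 + 3/4\<close> or \<open>x \<mapsto> x/2 - 1/4\<close> according as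
  \<open>x \<le> 1/2\<close>, with values outside \<open>(1/4, 3/4]\<close>, and \<open>a n \<le> 1/2\<close> holds exactly when \<open>u n = 0\<close>.
  Hence comparing \<open>a i\<close> with \<open>a j\<close> reduces, by parity, either to comparing \<open>a (i div 2)\<close>
  with \<open>a (j div 2)\<close> or to a comparison of letters of \<open>u\<close>, in the same way as the
  lexicographic comparison of the shifts of \<open>u\<close> reduces through the Thue--Morse morphism;
  the mixed-parity case needs that \<open>u\<close> has no three equal consecutive letters.

  For canonicity, every aligned block \<open>a (2^m r + s)\<close>, \<open>s < 2^m\<close>, consists of \<open>2^m\<close>
  distinct points of (0,1] lying in one translate of the grid \<open>2^-m \<int>\<close>, hence of exactly one
  point in each interval of length \<open>2^-m\<close>; so the count below \<open>t\<close> in a block is within 1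
  of \<open>2^m t\<close>, and in any window of length \<open>n\<close> within \<open>2\<cdot>2^m + n/2^m\<close> of \<open>n t\<close>.
\<close>

declare a_tm.simps [simp del] u_tm.simps [simp del]

lemma nat_double_cases:
  obtains p where "(n::nat) = 2 * p" | p where "n = Suc (2 * p)"
  by (metis Suc_eq_plus1 evenE oddE)

section \<open>Lexicographic order and the Thue--Morse morphism\<close>

lemma lex_less_irrefl: "\<not> lex_less u u"
  by (simp add: lex_less_def)

lemma lex_less_asym: "lex_less u v \<Longrightarrow> \<not> lex_less v u"
  unfolding lex_less_def by (metis less_asym linorder_neqE_nat)

lemma lex_less_shift_first: "u i < v j \<Longrightarrow> lex_less (shift i u) (shift j v)"
  unfolding lex_less_def shift_def by (intro exI[of _ 0]) simp

lemma lex_less_shift_Suc_iff: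
  assumes "u i = v j"
  shows "lex_less (shift (Suc i) u) (shift (Suc j) v) \<longleftrightarrow> lex_less (shift i u) (shift j v)"
proof
  assume "lex_less (shift (Suc i) u) (shift (Suc j) v)"
  then obtain k where "\<forall>l<k. u (Suc i + l) = v (Suc j + l)" "u (Suc i + k) < v (Suc j + k)"
    by (auto simp: lex_less_def shift_def)
  with assms show "lex_less (shift i u) (shift j v)"
    unfolding lex_less_def shift_def
    by (intro exI[of _ "Suc k"]) (auto simp: less_Suc_eq_0_disj)
next
  assume "lex_less (shift i u) (shift j v)"
  then obtain k where k: "\<forall>l<k. u (i + l) = v (j + l)" "u (i + k) < v (j + k)"
    by (auto simp: lex_less_def shift_def)
  with assms obtain k' where "k = Suc k'"
    by (metis add_0_right less_irrefl not0_implies_Suc)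
  with k show "lex_less (shift (Suc i) u) (shift (Suc j) v)"
    unfolding lex_less_def shift_def by (intro exI[of _ k']) auto
qed

definition tm_image :: "(nat \<Rightarrow> nat) \<Rightarrow> nat \<Rightarrow> nat" where
  "tm_image w n = tm_morph (w (n div 2)) ! (n mod 2)"

lemma tm_image_double: "w n < 2 \<Longrightarrow> tm_image w (2 * n) = w n"
  by (auto simp: tm_image_def tm_morph_def)

lemma tm_image_Suc_double: "w n < 2 \<Longrightarrow> tm_image w (Suc (2 * n)) = 1 - w n"
  by (auto simp: tm_image_def tm_morph_def)

lemma lex_less_compl_iff:
  assumes "\<And>n. u n < 2" "\<And>n. v n < 2"
  shows "lex_less (\<lambda>n. 1 - u n) (\<lambda>n. 1 - v n) \<longleftrightarrow> lex_less v u"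
proof -
  have "1 - u n = 1 - v n \<longleftrightarrow> v n = u n" "1 - u n < 1 - v n \<longleftrightarrow> v n < u n" for n
    using assms[of n] by auto
  then show ?thesis
    by (simp add: lex_less_def)
qed

lemma lex_less_tm_image_iff:
  assumes "\<And>n. u n < 2" "\<And>n. v n < 2"
  shows "lex_less (tm_image u) (tm_image v) \<longleftrightarrow> lex_less u v"
proof -
  have image: "tm_image u (2 * n) = u n" "tm_image u (Suc (2 * n)) = 1 - u n"
    "tm_image v (2 * n) = v n" "tm_image v (Suc (2 * n)) = 1 - v n" for n
    using assms by (simp_all add: tm_image_double tm_image_Suc_double)
  show ?thesis
  proof
    assume "lex_less (tm_image u) (tm_image v)"
    then obtain k where k: "\<forall>l<k. tm_image u l = tm_image v l" "tm_image u k < tm_image v k"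
      by (auto simp: lex_less_def)
    have equal_below: "u l = v l" if "2 * l < k" for l
      using k(1) that by (auto simp: image)
    show "lex_less u v"
    proof (cases k rule: nat_double_cases)
      case (1 p)
      with k(2) equal_below show ?thesis
        unfolding lex_less_def by (intro exI[of _ p]) (simp add: image)
    next
      case (2 p)
      with k(2) equal_below[of p] show ?thesis
        by (simp add: image)
    qed
  next
    assume "lex_less u v"
    then obtain k where k: "\<forall>l<k. u l = v l" "u k < v k"
      by (auto simp: lex_less_def)
    have "tm_image u l = tm_image v l" if "l < 2 * k" for l
      using that k(1) by (cases l rule: nat_double_cases) (auto simp: image)
    with k(2) show "lex_less (tm_image u) (tm_image v)"
      unfolding lex_less_def by (intro exI[of _ "2 * k"]) (simp add: image)
  qed
qed

locale tm_fixed_point =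
  fixes w :: "nat \<Rightarrow> nat"
  assumes fixed: "tm_image w = w"
    and binary: "w n < 2"
begin

lemma double [simp]: "w (2 * n) = w n"
  by (metis fixed binary tm_image_double)

lemma Suc_double [simp]: "w (Suc (2 * n)) = 1 - w n"
  by (metis fixed binary tm_image_Suc_double)

lemma Suc_Suc_double [simp]: "w (Suc (Suc (2 * n))) = w (Suc n)"
  using double[of "Suc n"] by simp

lemma Suc_Suc_Suc_double [simp]: "w (Suc (Suc (Suc (2 * n)))) = 1 - w (Suc n)"
  using Suc_double[of "Suc n"] by simp

lemma shift_double: "shift (2 * p) w = tm_image (shift p w)"
proof
  fix n
  show "shift (2 * p) w n = tm_image (shift p w) n"
    using double[of "p + n div 2"] Suc_double[of "p + n div 2"]
    by (cases n rule: nat_double_cases) (simp_all add: shift_def binary tm_image_double tm_image_Suc_double)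
qed

lemma no_letter_cube:
  assumes "w q = w (Suc q)"
  shows "w (Suc (Suc q)) = 1 - w q"
proof (cases q rule: nat_double_cases)
  case (1 p)
  with assms have "w p = 1 - w p"
    by simp
  with binary[of p] show ?thesis
    by arith
next
  case (2 p)
  with assms show ?thesis
    by simp
qed

lemma compl: "tm_fixed_point (\<lambda>n. 1 - w n)"
proof
  show "tm_image (\<lambda>n. 1 - w n) = (\<lambda>n. 1 - w n)"
  proof
    fix n
    show "tm_image (\<lambda>n. 1 - w n) n = 1 - w n"
      using binary by (cases n rule: nat_double_cases) (simp_all add: tm_image_double tm_image_Suc_double)
  qed
qed simp

lemma lex_less_shift_double_iff:
  "lex_less (shift (2 * p) w) (shift (2 * q) w) \<longleftrightarrow> lex_less (shift p w) (shift q w)"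
  unfolding shift_double by (rule lex_less_tm_image_iff) (simp_all add: shift_def binary)

lemma lex_less_shift_double_Suc_double:
  assumes "w q = 0"
  shows "lex_less (shift (2 * p) w) (shift (Suc (2 * q)) w)"
  \<comment> \<open>The words start \<open>w p, 1 - w p, w (p+1), 1 - w (p+1)\<close> and \<open>1, w (q+1), 1 - w (q+1), w (q+2)\<close>.\<close>
proof (cases "w p = 0")
  case True
  with assms show ?thesis
    by (intro lex_less_shift_first) simp
next
  case False
  then have p: "w p = 1"
    using binary[of p] by simp
  consider "w (Suc q) = 1" | "w (Suc q) = 0" "w (Suc p) = 0" | "w (Suc q) = 0" "w (Suc p) = 1"
    using binary[of "Suc q"] binary[of "Suc p"] by linarith
  then show ?thesis
  proof cases
    case 1
    have "lex_less (shift (Suc (2 * p)) w) (shift (Suc (Suc (2 * q))) w)"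
      using p 1 by (intro lex_less_shift_first) simp
    with p assms show ?thesis
      by (simp add: lex_less_shift_Suc_iff)
  next
    case 2
    have "lex_less (shift (Suc (Suc (2 * p))) w) (shift (Suc (Suc (Suc (2 * q)))) w)"
      using 2 by (intro lex_less_shift_first) simp
    with p assms 2 show ?thesis
      by (simp add: lex_less_shift_Suc_iff)
  next
    case 3
    have "w (Suc (Suc q)) = 1"
      using no_letter_cube[of q] assms 3 by simp
    then have "lex_less (shift (Suc (Suc (Suc (2 * p)))) w) (shift (Suc (Suc (Suc (Suc (2 * q))))) w)"
      using 3 double[of "Suc (Suc q)"] by (intro lex_less_shift_first) simp
    with p assms 3 show ?thesis
      by (simp add: lex_less_shift_Suc_iff)
  qed
qed

lemma lex_less_shift_Suc_double_double:
  assumes "w q = 1"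
  shows "lex_less (shift (Suc (2 * q)) w) (shift (2 * p) w)"
proof -
  have compl_shift: "shift i (\<lambda>n. 1 - w n) = (\<lambda>n. 1 - shift i w n)" for i
    by (simp add: shift_def)
  have "lex_less (shift (2 * p) (\<lambda>n. 1 - w n)) (shift (Suc (2 * q)) (\<lambda>n. 1 - w n))"
    using tm_fixed_point.lex_less_shift_double_Suc_double[OF compl] assms by simp
  moreover have "shift i w n < 2" for i n
    by (simp add: shift_def binary)
  ultimately show ?thesis
    unfolding compl_shift by (metis lex_less_compl_iff)
qed

end

lemma tm_image_u_tm: "tm_image u_tm = u_tm"
proof
  fix n
  show "tm_image u_tm n = u_tm n"
    by (cases "n = 0") (simp_all add: tm_image_def u_tm.simps[of n] u_tm.simps[of 0] tm_morph_def)
qed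

lemma u_tm_less_2: "u_tm n < 2"
proof -
  have "tm_morph x ! (n mod 2) < 2" for x
    by (cases "n mod 2 = 0") (simp_all add: tm_morph_def mod_2_eq_odd)
  then show ?thesis
    by (simp add: u_tm.simps[of n])
qed

interpretation u_tm: tm_fixed_point u_tm
  by unfold_locales (simp_all add: tm_image_u_tm u_tm_less_2)

section \<open>The order of the Thue--Morse permutation\<close>

lemma a_tm_0: "a_tm 0 = 1/2"
  by (simp add: a_tm.simps)

lemma a_tm_double: "a_tm (2 * n) = a_tm n / 2 + 1/4"
  by (cases "n = 0") (simp_all add: a_tm.simps[of "2 * n"] a_tm_0 phi_tm_def)

lemma a_tm_Suc_double:
  "a_tm (Suc (2 * n)) = (if a_tm n \<le> 1/2 then a_tm n / 2 + 3/4 else a_tm n / 2 - 1/4)"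
  by (simp add: a_tm.simps[of "Suc (2 * n)"] phi_tm_def)

lemma a_tm_bounds: "0 < a_tm n \<and> a_tm n \<le> 1"
  by (induction n rule: nat_bit_induct) (simp_all add: a_tm_0 a_tm_double a_tm_Suc_double)

lemma a_tm_le_half_iff: "a_tm n \<le> 1/2 \<longleftrightarrow> u_tm n = 0"
proof (induction n rule: nat_bit_induct)
  case zero
  then show ?case
    by (simp add: a_tm_0 u_tm.simps[of 0])
next
  case (even n)
  have "a_tm (2 * n) \<le> 1/2 \<longleftrightarrow> a_tm n \<le> 1/2"
    unfolding a_tm_double by linarith
  with even.IH show ?case
    by simp
next
  case (odd n)
  have "a_tm (Suc (2 * n)) \<le> 1/2 \<longleftrightarrow> \<not> a_tm n \<le> 1/2"
    using a_tm_bounds[of n] unfolding a_tm_Suc_double by auto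
  with odd.IH u_tm.binary[of n] show ?case
    by (cases "u_tm n = 0") simp_all
qed

lemma a_tm_Suc_double_u_tm:
  "a_tm (Suc (2 * n)) = (if u_tm n = 0 then a_tm n / 2 + 3/4 else a_tm n / 2 - 1/4)"
  by (simp only: a_tm_Suc_double a_tm_le_half_iff)

lemma a_tm_double_bounds: "1/4 < a_tm (2 * n) \<and> a_tm (2 * n) \<le> 3/4"
  using a_tm_bounds[of n] by (simp add: a_tm_double)

lemma a_tm_Suc_double_gt: "u_tm n = 0 \<Longrightarrow> 3/4 < a_tm (Suc (2 * n))"
  using a_tm_bounds[of n] by (simp add: a_tm_Suc_double_u_tm)

lemma a_tm_Suc_double_le: "u_tm n \<noteq> 0 \<Longrightarrow> a_tm (Suc (2 * n)) \<le> 1/4"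
  using a_tm_bounds[of n] by (simp add: a_tm_Suc_double_u_tm)

lemma inj_a_tm: "inj a_tm"
proof -
  have "a_tm i = a_tm j \<Longrightarrow> i = j" for i j
  proof (induction "i + j" arbitrary: i j rule: less_induct)
    case less
    have parity_separation: "a_tm (2 * p) \<noteq> a_tm (Suc (2 * q))" for p q
      using a_tm_double_bounds[of p] a_tm_Suc_double_gt[of q] a_tm_Suc_double_le[of q]
      by (cases "u_tm q = 0") auto
    show ?case
    proof (cases i rule: nat_double_cases)
      case i: (1 p)
      show ?thesis
      proof (cases j rule: nat_double_cases)
        case j: (1 q)
        have "a_tm p = a_tm q"
          using i j less.prems by (simp add: a_tm_double)
        moreover have "p + q < i + j \<or> p + q = 0"
          using i j by linarith
        ultimately show ?thesis
          using i j less.hyps[of p q] by auto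
      next
        case j: (2 q)
        with i less.prems parity_separation show ?thesis
          by simp
      qed
    next
      case i: (2 p)
      show ?thesis
      proof (cases j rule: nat_double_cases)
        case j: (1 q)
        with i less.prems parity_separation[of q p] show ?thesis
          by simp
      next
        case j: (2 q)
        have "u_tm i = 0 \<longleftrightarrow> u_tm j = 0"
          using less.prems a_tm_le_half_iff by metis
        then have "u_tm p = u_tm q"
          using i j u_tm.binary[of p] u_tm.binary[of q] by auto
        with i j less.prems have "a_tm p = a_tm q"
          by (simp add: a_tm_Suc_double_u_tm split: if_splits)
        with i j less.hyps show ?thesis
          by simp
      qed
    qed
  qed
  then show ?thesis
    by (rule injI)
qed

lemma a_tm_less_imp_lex_less:
  "a_tm i < a_tm j \<Longrightarrow> lex_less (shift i u_tm) (shift j u_tm)"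
proof (induction "i + j" arbitrary: i j rule: less_induct)
  case less
  show ?case
  proof (cases i rule: nat_double_cases)
    case i: (1 p)
    show ?thesis
    proof (cases j rule: nat_double_cases)
      case j: (1 q)
      with i less.prems have "a_tm p < a_tm q" "p + q < i + j"
        by (auto simp: a_tm_double intro: Nat.gr0I)
      with i j less.hyps show ?thesis
        by (simp add: u_tm.lex_less_shift_double_iff)
    next
      case j: (2 q)
      have "u_tm q = 0"
        using i j less.prems a_tm_double_bounds[of p] a_tm_Suc_double_le[of q]
        by (cases "u_tm q = 0") auto
      with i j show ?thesis
        by (simp add: u_tm.lex_less_shift_double_Suc_double)
    qed
  next
    case i: (2 p)
    show ?thesis
    proof (cases j rule: nat_double_cases)
      case j: (1 q)
      have "u_tm p \<noteq> 0"
        using i j less.prems a_tm_double_bounds[of q] a_tm_Suc_double_gt[of p]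
        by (cases "u_tm p = 0") auto
      with u_tm.binary[of p] have "u_tm p = 1"
        by simp
      with i j show ?thesis
        by (simp add: u_tm.lex_less_shift_Suc_double_double)
    next
      case j: (2 q)
      show ?thesis
      proof (cases "u_tm p = u_tm q")
        case True
        with i j less.prems have "a_tm p < a_tm q" "p + q < i + j"
          by (auto simp: a_tm_Suc_double_u_tm split: if_splits)
        with i j less.hyps True show ?thesis
          by (simp add: u_tm.lex_less_shift_double_iff lex_less_shift_Suc_iff)
      next
        case False
        have "u_tm p \<noteq> 0"
          using False i j less.prems a_tm_Suc_double_gt[of p] a_tm_Suc_double_le[of q]
          by (cases "u_tm p = 0") auto
        with False u_tm.binary[of p] u_tm.binary[of q] have "u_tm p = 1" "u_tm q = 0"
          by auto
        with i j show ?thesis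
          by (intro lex_less_shift_first) simp
      qed
    qed
  qed
qed

lemma a_tm_less_iff_lex_less:
  "a_tm i < a_tm j \<longleftrightarrow> lex_less (shift i u_tm) (shift j u_tm)"
proof
  assume lex: "lex_less (shift i u_tm) (shift j u_tm)"
  then have "i \<noteq> j"
    using lex_less_irrefl by blast
  then have "a_tm i \<noteq> a_tm j"
    using inj_a_tm by (auto dest: injD)
  with lex show "a_tm i < a_tm j"
    using a_tm_less_imp_lex_less[of j i] lex_less_asym by fastforce
qed (rule a_tm_less_imp_lex_less)

lemma a_tm_in_alpha_perm: "a_tm \<in> alpha_perm u_tm"
  unfolding alpha_perm_def using inj_a_tm a_tm_less_iff_lex_less by blast

section \<open>Uniform distribution\<close>

definition window_count :: "(nat \<Rightarrow> real) \<Rightarrow> nat \<Rightarrow> nat \<Rightarrow> real \<Rightarrow> nat" where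
  "window_count a j n t = card {k. k < n \<and> a (j + k) < t}"

lemma window_count_add:
  "window_count a j (m + n) t = window_count a j m t + window_count a (j + m) n t"
proof -
  have split: "{k. k < m + n \<and> a (j + k) < t}
      = {k. k < m \<and> a (j + k) < t} \<union> (\<lambda>k. m + k) ` {k. k < n \<and> a (j + m + k) < t}"
    by (auto simp: image_iff add.assoc) (metis add.assoc add_less_cancel_left le_add_diff_inverse not_le)
  have "{k. k < m \<and> a (j + k) < t} \<inter> (\<lambda>k. m + k) ` {k. k < n \<and> a (j + m + k) < t} = {}"
    by auto
  then show ?thesis
    unfolding window_count_def split by (simp add: card_Un_disjoint card_image)
qed

lemma window_count_le: "window_count a j n t \<le> n"
  unfolding window_count_def by (rule card_mono[of "{..<n}", simplified]) auto

lemma window_discrepancy_le_length: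
  assumes "0 \<le> t" "t \<le> 1"
  shows "\<bar>real (window_count a j n t) - n * t\<bar> \<le> n"
proof -
  have "real (window_count a j n t) \<le> n"
    using window_count_le by simp
  moreover have "0 \<le> n * t" "n * t \<le> n"
    using assms by (simp_all add: mult_left_le)
  ultimately show ?thesis
    by linarith
qed

lemma card_below_shifted_grid:
  fixes f :: "nat \<Rightarrow> real" and B :: nat and t :: real
  assumes "0 < B" and inj: "inj_on f {..<B}"
    and range: "\<And>s. s < B \<Longrightarrow> 0 < f s \<and> f s \<le> 1"
    and grid: "\<And>s. s < B \<Longrightarrow> \<exists>z::int. f s = c + z / B"
    and t: "0 \<le> t" "t \<le> 1"
  shows "\<bar>real (card {s. s < B \<and> f s < t}) - B * t\<bar> \<le> 1"
proof -
  define \<delta> where "\<delta> = B * c - \<lceil>B * c\<rceil> + 1"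
  define \<zeta> where "\<zeta> s = \<lceil>B * f s\<rceil> - 1" for s
  have \<delta>: "0 < \<delta>" "\<delta> \<le> 1"
    using ceiling_correct[of "B * c"] by (auto simp: \<delta>_def)
  have scaled: "B * f s = \<zeta> s + \<delta>" if s: "s < B" for s
  proof -
    obtain z :: int where "f s = c + z / B"
      using grid s by blast
    then have "B * f s = B * c + z"
      using \<open>0 < B\<close> by (simp add: field_simps)
    then show ?thesis
      by (simp add: \<zeta>_def \<delta>_def)
  qed
  have \<zeta>_range: "\<zeta> s \<in> {0..<int B}" if "s < B" for s
  proof -
    have "0 < B * f s" "B * f s \<le> B"
      using range[OF that] \<open>0 < B\<close> by auto
    then have "-1 < \<zeta> s" "\<zeta> s < int B"
      using scaled[OF that] \<delta> by linarith+
    then show ?thesis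
      by simp
  qed
  have "inj_on \<zeta> {..<B}"
  proof (rule inj_onI)
    fix s s' assume "s \<in> {..<B}" "s' \<in> {..<B}" "\<zeta> s = \<zeta> s'"
    then have "f s = f s'"
      using scaled \<open>0 < B\<close> by (metis lessThan_iff mult_cancel_left of_nat_0_less_iff less_irrefl)
    with inj \<open>s \<in> {..<B}\<close> \<open>s' \<in> {..<B}\<close> show "s = s'"
      by (auto dest: inj_onD)
  qed
  then have image: "\<zeta> ` {..<B} = {0..<int B}"
    using \<zeta>_range by (intro card_subset_eq) (auto simp: card_image)
  have below: "f s < t \<longleftrightarrow> \<zeta> s < B * t - \<delta>" if "s < B" for s
    using scaled[OF that] \<open>0 < B\<close> by (smt (verit) mult_less_cancel_left_pos of_nat_0_less_iff)
  define x where "x = B * t - \<delta>"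
  have "card {s. s < B \<and> f s < t} = card (\<zeta> ` {s. s < B \<and> f s < t})"
    by (rule card_image[symmetric], rule inj_on_subset[OF \<open>inj_on \<zeta> {..<B}\<close>]) auto
  also have "\<zeta> ` {s. s < B \<and> f s < t} = {z \<in> \<zeta> ` {..<B}. z < x}"
    using below by (auto simp: x_def)
  also have "\<dots> = {0..<min (int B) \<lceil>x\<rceil>}"
    unfolding image by (auto simp: less_ceiling_iff)
  finally have "real (card {s. s < B \<and> f s < t}) = max 0 (min (real B) (of_int \<lceil>x\<rceil>))"
    by simp
  moreover obtain k where "of_int \<lceil>x\<rceil> = k" "x \<le> k" "k < x + 1"
    using ceiling_correct[of x] by force
  ultimately have "real (card {s. s < B \<and> f s < t}) = max 0 (min (real B) k)" "B * t - 1 \<le> k" "k < B * t + 1"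
    using \<delta> by (auto simp: x_def)
  moreover have "0 \<le> B * t" "B * t \<le> B"
    using t by (simp_all add: mult_left_le)
  ultimately show ?thesis
    unfolding abs_le_iff max_def min_def by auto
qed

lemma window_discrepancy_aligned:
  assumes block: "\<And>r. \<bar>real (window_count a (B * r) B t) - B * t\<bar> \<le> 1"
  shows "\<bar>real (window_count a (B * r) (L * B) t) - real (L * B) * t\<bar> \<le> L"
proof (induction L arbitrary: r)
  case 0
  then show ?case
    by (simp add: window_count_def)
next
  case (Suc L)
  have "window_count a (B * r) (Suc L * B) t
      = window_count a (B * r) B t + window_count a (B * Suc r) (L * B) t"
    using window_count_add[of a "B * r" B "L * B" t] by (simp add: algebra_simps)
  moreover have "real (Suc L * B) * t = B * t + real (L * B) * t"
    by (simp add: algebra_simps)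
  ultimately show ?case
    using block[of r] Suc.IH[of "Suc r"] by (simp add: abs_le_iff)
qed

lemma window_discrepancy_le:
  assumes "0 < B" and t: "0 \<le> t" "t \<le> 1"
    and block: "\<And>r. \<bar>real (window_count a (B * r) B t) - B * t\<bar> \<le> 1"
  shows "\<bar>real (window_count a j n t) - n * t\<bar> \<le> 2 * B + n / B"
proof -
  define d where "d = B - j mod B"
  show ?thesis
  proof (cases "n \<le> d")
    case True
    then have "\<bar>real (window_count a j n t) - n * t\<bar> \<le> B"
      using window_discrepancy_le_length[OF t, of a j n] by (simp add: d_def)
    then show ?thesis
      by (simp add: add_increasing2)
  next
    case False
    define L where "L = (n - d) div B"
    define e where "e = (n - d) mod B"
    define r where "r = Suc (j div B)"
    have head: "j + d = B * r"
      using mod_less_divisor[OF \<open>0 < B\<close>, of j] mult_div_mod_eq[of B j]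
      unfolding d_def r_def mult_Suc_right by arith
    have n_split: "n = d + (L * B + e)"
      using False div_mult_mod_eq[of "n - d" B] unfolding L_def e_def by simp
    have count: "window_count a j n t
        = window_count a j d t + window_count a (B * r) (L * B) t + window_count a (B * r + L * B) e t"
      unfolding n_split window_count_add head by simp
    have "real n * t = d * t + real (L * B) * t + e * t"
      using n_split by (simp add: algebra_simps)
    with count window_discrepancy_le_length[OF t, of a j d]
      window_discrepancy_aligned[OF block, of r L]
      window_discrepancy_le_length[OF t, of a "B * r + L * B" e]
    have "\<bar>real (window_count a j n t) - n * t\<bar> \<le> d + L + e"
      by (simp add: abs_le_iff)
    moreover have "real L \<le> n / B"
      using n_split \<open>0 < B\<close> by (simp add: field_simps flip: of_nat_mult)
    moreover have "d \<le> B" "e < B"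
      using \<open>0 < B\<close> by (simp_all add: d_def e_def)
    ultimately show ?thesis
      by linarith
  qed
qed

lemma uniform_frequency_of_block_discrepancy:
  assumes t: "0 \<le> t" "t \<le> 1" and "0 < \<epsilon>"
    and block: "\<And>m r. \<bar>real (window_count a (2 ^ m * r) (2 ^ m) t) - 2 ^ m * t\<bar> \<le> 1"
  shows "\<exists>N. \<forall>n\<ge>N. \<forall>j. \<bar>real (window_count a j n t) / n - t\<bar> < \<epsilon>"
proof -
  obtain m where m: "2 / \<epsilon> < 2 ^ m"
    using real_arch_pow[of 2 "2 / \<epsilon>"] by auto
  define B :: nat where "B = 2 ^ m"
  have "0 < B"
    by (simp add: B_def)
  have "2 < \<epsilon> * B"
    using m \<open>0 < \<epsilon>\<close> by (simp add: B_def divide_less_eq mult.commute)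
  then have B_large: "1 / B < \<epsilon> / 2"
    using \<open>0 < B\<close> by (simp add: divide_less_eq)
  have discrepancy: "\<bar>real (window_count a j n t) - n * t\<bar> \<le> 2 * B + n / B" for j n
    using window_discrepancy_le[OF \<open>0 < B\<close> t] block[of m] by (simp add: B_def)
  show ?thesis
  proof (intro exI allI impI)
    fix n j
    assume "nat \<lceil>4 * B / \<epsilon>\<rceil> + 1 \<le> n"
    moreover have "4 * B / \<epsilon> \<le> nat \<lceil>4 * B / \<epsilon>\<rceil>"
      by (rule real_nat_ceiling_ge)
    ultimately have n: "4 * B / \<epsilon> < n"
      by linarith
    moreover have "0 \<le> 4 * B / \<epsilon>"
      using \<open>0 < \<epsilon>\<close> by simp
    ultimately have "0 < real n"
      by linarith
    have "4 * B < \<epsilon> * n"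
      using n \<open>0 < \<epsilon>\<close> by (simp add: divide_less_eq mult.commute)
    then have "2 * B / n < \<epsilon> / 2"
      using \<open>0 < real n\<close> by (simp add: divide_less_eq)
    have "\<bar>real (window_count a j n t) / n - t\<bar> = \<bar>real (window_count a j n t) - n * t\<bar> / n"
      using \<open>0 < real n\<close> by (simp add: field_simps)
    also have "\<dots> \<le> (2 * B + n / B) / n"
      using discrepancy \<open>0 < real n\<close> by (simp add: divide_right_mono)
    also have "\<dots> = 2 * B / n + 1 / B"
      using \<open>0 < real n\<close> by (simp add: add_divide_distrib)
    also have "\<dots> < \<epsilon>"
      using \<open>2 * B / n < \<epsilon> / 2\<close> B_large by linarith
    finally show "\<bar>real (window_count a j n t) / n - t\<bar> < \<epsilon>" .
  qed
qed

lemma a_tm_dyadic_block: "\<exists>c. \<forall>s<2 ^ m. \<exists>z::int. a_tm (2 ^ m * r + s) = c + z / 2 ^ m"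
proof (induction m)
  case 0
  show ?case
    by (intro exI[of _ "a_tm r"]) auto
next
  case (Suc m)
  then obtain c where c: "\<And>s. s < 2 ^ m \<Longrightarrow> \<exists>z::int. a_tm (2 ^ m * r + s) = c + z / 2 ^ m"
    by blast
  \<comment> \<open>The three branches of \<open>phi_tm\<close> differ from \<open>x/2 + 1/4\<close> by \<open>0\<close> or \<open>\<plusminus>1/2\<close>, a multiple of \<open>2^-(m+1)\<close>.\<close>
  have "\<exists>z::int. a_tm (2 ^ Suc m * r + s) = (c / 2 + 1 / 4) + z / 2 ^ Suc m"
    if s: "s < 2 ^ Suc m" for s
  proof -
    define n where "n = 2 ^ m * r + s div 2"
    have "s div 2 < 2 ^ m"
      using less_mult_imp_div_less[of s "2 ^ m" 2] s by (simp add: mult.commute)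
    then obtain z :: int where z: "a_tm n = c + z / 2 ^ m"
      using c unfolding n_def by blast
    have index: "2 ^ Suc m * r + s = 2 * n + s mod 2"
      unfolding n_def by simp
    have pow: "(2::real) ^ Suc m = 2 * 2 ^ m"
      by simp
    consider "s mod 2 = 0" | "s mod 2 = 1" "a_tm n \<le> 1 / 2" | "s mod 2 = 1" "\<not> a_tm n \<le> 1 / 2"
      by linarith
    then show ?thesis
    proof cases
      case 1
      have "a_tm (2 * n) = (c / 2 + 1 / 4) + of_int z / 2 ^ Suc m"
        unfolding a_tm_double z pow by (simp add: field_simps)
      with 1 show ?thesis
        unfolding index by auto
    next
      case 2
      have "a_tm (Suc (2 * n)) = (c / 2 + 1 / 4) + of_int (z + 2 ^ m) / 2 ^ Suc m"
        using 2 unfolding a_tm_Suc_double z pow by (simp add: field_simps)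
      with 2 show ?thesis
        unfolding index by (metis Suc_eq_plus1)
    next
      case 3
      have "a_tm (Suc (2 * n)) = (c / 2 + 1 / 4) + of_int (z - 2 ^ m) / 2 ^ Suc m"
        using 3 unfolding a_tm_Suc_double z pow by (simp add: field_simps)
      with 3 show ?thesis
        unfolding index by (metis Suc_eq_plus1)
    qed
  qed
  then show ?case
    by blast
qed

lemma a_tm_block_discrepancy:
  assumes "0 \<le> t" "t \<le> 1"
  shows "\<bar>real (window_count a_tm (2 ^ m * r) (2 ^ m) t) - 2 ^ m * t\<bar> \<le> 1"
proof -
  obtain c where "\<forall>s<2 ^ m. \<exists>z::int. a_tm (2 ^ m * r + s) = c + z / 2 ^ m"
    using a_tm_dyadic_block by blast
  moreover have "inj_on (\<lambda>s. a_tm (2 ^ m * r + s)) {..<2 ^ m}"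
    by (auto intro!: inj_onI dest: injD[OF inj_a_tm])
  ultimately have "\<bar>real (card {s. s < 2 ^ m \<and> a_tm (2 ^ m * r + s) < t}) - real (2 ^ m) * t\<bar> \<le> 1"
    using a_tm_bounds assms by (intro card_below_shifted_grid) auto
  then show ?thesis
    by (simp add: window_count_def)
qed

lemma canonical_a_tm: "canonical a_tm"
  unfolding canonical_def
proof (intro conjI allI impI)
  fix t \<epsilon> :: real
  assume "0 \<le> t \<and> t \<le> 1" "0 < \<epsilon>"
  then show "\<exists>N. \<forall>n\<ge>N. \<forall>j. \<bar>real (card {k. k < n \<and> a_tm (j + k) < t}) / real n - t\<bar> < \<epsilon>"
    using uniform_frequency_of_block_discrepancy[of t \<epsilon> a_tm] a_tm_block_discrepancy
    by (simp add: window_count_def)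
qed (use inj_a_tm a_tm_bounds less_imp_le in auto)

theorem mainTheorem4:
  shows "canonical a_tm \<and> a_tm \<in> alpha_perm u_tm \<and> ergodic (alpha_perm u_tm)"
  using canonical_a_tm a_tm_in_alpha_perm unfolding ergodic_def by blast

end
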